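(* Assume Setup (S) and the completion data (C). Then for every $n\ge 1$, $\Phi_n$ maps $\mathbb{Z}^{n+1}$ injectively into $C(X_{min},G)$, and $\Phi_{n+1}\circ\phi_{n*}=\Phi_n$, where $\phi_{n*}:\mathbb{Z}^{n+1}\to\mathbb{Z}^{n+2}$ is multiplication by $\overline{A}_{n,n+1}$. Consequently there is an injective group homomorphism $\Psi:K_0(\mathfrak{A})=\varinjlim(\mathbb{Z}^{n+1},\phi_{n*})\to C(X_{min},G)$ with $\Psi\circ\iota_n=\Phi_n$ ($\iota_n$ the canonical maps into the limit), and $\Psi$ sends the order unit $[1_{\mathfrak{A}}]$ to $\chi_{X_{min}}$.
   Context: Setup (S): Let $\mathfrak{A}=\varinjlim(\mathfrak{A}_n,\phi_n)$ be an AF C$^*$-algebra with $\mathfrak{A}_0=\mathbb{C}$, $\mathfrak{A}_n$ having exactly $n+1$ summands, $\phi_n$ unital injective $*$-homomorphisms with multiplicity matrices $\overline{A}_{n,n+1}\in M_{n+2,n+1}(\mathbb{N})$ ($(i,j)$ entry = multiplicity of summand $j$ of $\mathfrak{A}_n$ in summand $i$ of $\mathfrak{A}_{n+1}$), each of rank $n+1$. The Bratteli diagram has vertices $v(i,n)$, $1\le i\le n+1$, and $(\overline{A}_{n,n+1})_{ij}$ edges from $v(j,n)$ to $v(i,n+1)$. A minimal reduction is a subgraph with the same vertices, obtained by deleting edges only, in which for all $n\ge 0$ each vertex at level $n+1$ receives exactly one edge from level $n$ and each vertex at level $n$ emits at least one edge to level $n+1$. Fix a minimal reduction. Then for each $n\ge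 1$ there are unique $1\le r'_n<r_n\le n+1$ and $1\le a_n\le n$ such that $v(r'_n,n)$ and $v(r_n,n)$ are the two vertices joined to $v(a_n,n-1)$, every other vertex of level $n-1$ being joined to exactly one vertex of level $n$; set $r_0=1$. $X_{min}$ is the set of infinite paths $(v(i_n,n))_{n\ge0}$, $i_0=1$, in the minimal reduction, with the topology having as clopen basis the nonempty sets $B(i,n)=\{\text{paths with }i_n=i\}$; it is a compact metrizable totally disconnected space. Define the linear map $R_n:\mathbb{C}^{n+1}\to C(X_{min},\mathbb{C})$ by $R_n(\alpha_1,\dots,\alpha_{n+1})=\sum_{l=0}^n\alpha_{l+1}\chi_{B(r_l,l)}$. Completion data (C): $K_0(\mathfrak{A}_n)$ is identified with $\mathbb{Z}^{n+1}$ (column vectors, positive cone $\mathbb{Z}_+^{n+1}$), $K_0(\phi_n)=\phi_{n*}$ is multiplication by $\overline{A}_{n,n+1}$, and $K_0(\mathfrak{A})=\varinjlim(\mathbb{Z}^{n+1},\phi_{n*})$ with order unit the image of $1\in\mathbb{Z}=K_0(\mathfrak{A}_0)$. For each $n\ge 0$ choose a column $c_n\in\mathbb{Z}^{n+2}$ such that $A_{n,n+1}=[\,\overline{A}_{n,n+1}\mid c_n\,]\in M_{n+2}(\mathbb{Z})$ is invertible. Put $A_n=(A_{0,1}^{-1}\oplus I_{n-1})(A_{1,2}^{-1}\oplus I_{n-2})\cdots(A_{n-2,n-1}^{-1}\oplus I_1)A_{n-1,n}^{-1}$ for $n\ge1$ (so $A_1=A_{0,1}^{-1}$), let $G=\bigcup_{n\ge1}\{a/\det(A_n^{-1}):a\in\mathbb{Z}\}\subseteq\mathbb{Q}$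 with the discrete topology, and $\Phi_n=R_n\circ A_n$ restricted to $\mathbb{Z}^{n+1}$. *)

theory Defs
  imports "HOL-Analysis.Abstract_Topology" "HOL-Library.Indicator_Function" "Jordan_Normal_Form.DL_Rank"
begin

text \<open>Ab n is the multiplicity matrix from level n to level n+1,
  an (n+2) x (n+1) integer matrix; entry (i,j) with 1-based indices i,j of the paper is
  Ab n $$ (i-1, j-1). Vertices v(i,n) are represented by 1-based indices i in {1..n+1}.
  E n j i means: the minimal reduction keeps an edge from v(j,n) to v(i,n+1).\<close>

definition min_reduction :: "(nat \<Rightarrow> int mat) \<Rightarrow> (nat \<Rightarrow> nat \<Rightarrow> nat \<Rightarrow> bool) \<Rightarrow> bool" where
  "min_reduction Ab E \<longleftrightarrow>
     (\<forall>n j i. E n j i \<longrightarrow> j \<in> {1..n+1} \<and> i \<in> {1..n+2} \<and> Ab n $$ (i-1, j-1) \<ge> 1)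
   \<and> (\<forall>n. \<forall>i\<in>{1..n+2}. \<exists>!j. E n j i)
   \<and> (\<forall>n. \<forall>j\<in>{1..n+1}. \<exists>i. E n j i)"

text \<open>r_n: for n \<ge> 1 the larger of the two level-n vertices joined to the same vertex
  a_n of level n-1; r_0 = 1.\<close>
definition rr :: "(nat \<Rightarrow> nat \<Rightarrow> nat \<Rightarrow> bool) \<Rightarrow> nat \<Rightarrow> nat" where
  "rr E n = (if n = 0 then 1 else
     (THE r. \<exists>r' a. 1 \<le> r' \<and> r' < r \<and> r \<le> n+1 \<and> 1 \<le> a \<and> a \<le> n
                    \<and> E (n-1) a r' \<and> E (n-1) a r))"

definition Xmin :: "(nat \<Rightarrow> nat \<Rightarrow> nat \<Rightarrow> bool) \<Rightarrow> (nat \<Rightarrow> nat) set" where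
  "Xmin E = {x. x 0 = 1 \<and> (\<forall>n. E n (x n) (x (Suc n)))}"

definition Bset :: "(nat \<Rightarrow> nat \<Rightarrow> nat \<Rightarrow> bool) \<Rightarrow> nat \<Rightarrow> nat \<Rightarrow> (nat \<Rightarrow> nat) set" where
  "Bset E i n = {x \<in> Xmin E. x n = i}"

definition Xtop :: "(nat \<Rightarrow> nat \<Rightarrow> nat \<Rightarrow> bool) \<Rightarrow> (nat \<Rightarrow> nat) topology" where
  "Xtop E = topology_generated_by {Bset E i n | i n. Bset E i n \<noteq> {}}"

definition Cfun :: "(nat \<Rightarrow> nat \<Rightarrow> nat \<Rightarrow> bool) \<Rightarrow> rat set \<Rightarrow> ((nat \<Rightarrow> nat) \<Rightarrow> rat) set" where
  "Cfun E G = {f. continuous_map (Xtop E) (discrete_topology G) f}"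

text \<open>R_n(alpha) = sum_{l=0}^n alpha_{l+1} chi_{B(r_l,l)}; alpha_{l+1} is alpha $ l.\<close>
definition Rmap :: "(nat \<Rightarrow> nat \<Rightarrow> nat \<Rightarrow> bool) \<Rightarrow> nat \<Rightarrow> rat vec \<Rightarrow> (nat \<Rightarrow> nat) \<Rightarrow> rat" where
  "Rmap E n \<alpha> = (\<lambda>x. \<Sum>l\<le>n. \<alpha> $ l * indicator (Bset E (rr E l) l) x)"

definition Acomb :: "(nat \<Rightarrow> int mat) \<Rightarrow> (nat \<Rightarrow> int vec) \<Rightarrow> nat \<Rightarrow> int mat" where
  "Acomb Ab c n = mat (n+2) (n+2) (\<lambda>(i,j). if j < n+1 then Ab n $$ (i,j) else c n $ i)"

definition mat_inv :: "nat \<Rightarrow> rat mat \<Rightarrow> rat mat" where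
  "mat_inv k M = (THE B. B \<in> carrier_mat k k \<and> M * B = 1\<^sub>m k \<and> B * M = 1\<^sub>m k)"

definition dsum :: "rat mat \<Rightarrow> nat \<Rightarrow> rat mat" where
  "dsum M k = four_block_mat M (0\<^sub>m (dim_row M) k) (0\<^sub>m k (dim_col M)) (1\<^sub>m k)"

text \<open>A_n = (A_{0,1}^{-1} \<oplus> I_{n-1}) (A_{1,2}^{-1} \<oplus> I_{n-2}) ... (A_{n-1,n}^{-1} \<oplus> I_0).\<close>
definition Amat :: "(nat \<Rightarrow> int mat) \<Rightarrow> (nat \<Rightarrow> int vec) \<Rightarrow> nat \<Rightarrow> rat mat" where
  "Amat Ab c n = foldr (\<lambda>k M. dsum (mat_inv (k+2) (map_mat rat_of_int (Acomb Ab c k))) (n-1-k) * M)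
                   [0..<n] (1\<^sub>m (n+1))"

definition Gset :: "(nat \<Rightarrow> int mat) \<Rightarrow> (nat \<Rightarrow> int vec) \<Rightarrow> rat set" where
  "Gset Ab c = {q. \<exists>n\<ge>1. \<exists>a::int. q = rat_of_int a / det (mat_inv (n+1) (Amat Ab c n))}"

definition Phi :: "(nat \<Rightarrow> int mat) \<Rightarrow> (nat \<Rightarrow> int vec) \<Rightarrow> (nat \<Rightarrow> nat \<Rightarrow> nat \<Rightarrow> bool)
    \<Rightarrow> nat \<Rightarrow> int vec \<Rightarrow> (nat \<Rightarrow> nat) \<Rightarrow> rat" where
  "Phi Ab c E n v = Rmap E n (Amat Ab c n *\<^sub>v map_vec rat_of_int v)"

text \<open>The direct limit K_0 = lim (Z^{n+1}, phi_{n*}), phi_{n*} v = Ab n *v v.\<close>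
fun phi_to :: "(nat \<Rightarrow> int mat) \<Rightarrow> nat \<Rightarrow> nat \<Rightarrow> int vec \<Rightarrow> int vec" where
  "phi_to Ab n 0 v = v"
| "phi_to Ab n (Suc k) v = (if Suc k \<le> n then v else Ab k *\<^sub>v phi_to Ab n k v)"

definition lim_dom :: "(nat \<times> int vec) set" where
  "lim_dom = (SIGMA n:UNIV. carrier_vec (n+1))"

definition lim_rel :: "(nat \<Rightarrow> int mat) \<Rightarrow> ((nat \<times> int vec) \<times> (nat \<times> int vec)) set" where
  "lim_rel Ab = {((n,v),(m,w)). (n,v) \<in> lim_dom \<and> (m,w) \<in> lim_dom \<and>
                     (\<exists>k\<ge>max n m. phi_to Ab n k v = phi_to Ab m k w)}"

definition K0 :: "(nat \<Rightarrow> int mat) \<Rightarrow> (nat \<times> int vec) set set" where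
  "K0 Ab = lim_dom // lim_rel Ab"

definition iota :: "(nat \<Rightarrow> int mat) \<Rightarrow> nat \<Rightarrow> int vec \<Rightarrow> (nat \<times> int vec) set" where
  "iota Ab n v = lim_rel Ab `` {(n,v)}"

definition K0_add :: "(nat \<Rightarrow> int mat) \<Rightarrow> (nat \<times> int vec) set \<Rightarrow> (nat \<times> int vec) set \<Rightarrow> (nat \<times> int vec) set" where
  "K0_add Ab X Y = (let (n,v) = (SOME p. p \<in> X); (m,w) = (SOME p. p \<in> Y); k = max n m
                    in iota Ab k (phi_to Ab n k v + phi_to Ab m k w))"

text \<open>Order unit: image of 1 in Z = K_0(A_0).\<close>
definition K0_unit :: "(nat \<Rightarrow> int mat) \<Rightarrow> (nat \<times> int vec) set" where
  "K0_unit Ab = iota Ab 0 (vec 1 (\<lambda>_. 1))"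

end

theory Submission
  imports Defs
begin

text \<open>
  The matrix A_n is the inverse of the integer matrix P_n = A_{n-1,n} (P_{n-1} \<oplus> I_1), so
  det P_n \<cdot> A_n = adj P_n is integral and Phi_n takes values in G. Since A_{n,n+1}^{-1} sends
  the columns of Abar_{n,n+1} back to unit vectors, A_{n+1} Abar_{n,n+1} v = (A_n v, 0), which is
  the compatibility Phi_{n+1} \<circ> phi_{n*} = Phi_n. Injectivity of Phi_n reduces to the linear
  independence of the indicators of the sets B(r_l, l): the vertex r_{n+1} has a smaller sibling r',
  and two paths that agree up to level n but pass through r_{n+1} and r' respectively see the same
  earlier indicators and differ only on the last one. Continuity is automatic because Phi_n v
  depends only on the level-n vertex of a path. The compatible injections Phi_n induce Psi on the
  direct limit, and two representatives are identified there exactly when their images agree.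
\<close>

text \<open>The block sum M \<oplus> I_k of Defs.dsum for arbitrary entry types, so that it also
  applies to the integer matrices Pmat below.\<close>
definition pad_one :: "'a::{zero,one} mat \<Rightarrow> nat \<Rightarrow> 'a mat" where
  "pad_one M k = four_block_mat M (0\<^sub>m (dim_row M) k) (0\<^sub>m k (dim_col M)) (1\<^sub>m k)"

lemma dsum_eq_pad_one: "dsum = pad_one"
  by (intro ext) (simp add: dsum_def pad_one_def)

lemma pad_one_carrier_mat: "M \<in> carrier_mat r c \<Longrightarrow> pad_one M k \<in> carrier_mat (r + k) (c + k)"
  unfolding pad_one_def by auto

lemma dim_pad_one[simp]:
  "dim_row (pad_one M k) = dim_row M + k" "dim_col (pad_one M k) = dim_col M + k"
  unfolding pad_one_def by auto

lemma index_pad_one: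
  "i < dim_row M + k \<Longrightarrow> j < dim_col M + k \<Longrightarrow> pad_one M k $$ (i,j) =
   (if i < dim_row M then if j < dim_col M then M $$ (i,j) else 0
    else if j < dim_col M then 0 else if i - dim_row M = j - dim_col M then 1 else 0)"
  unfolding pad_one_def by auto

lemma pad_one_one_mat[simp]: "pad_one (1\<^sub>m d) k = 1\<^sub>m (d + k)"
  unfolding pad_one_def by simp

lemma pad_one_0[simp]: "pad_one M 0 = M"
  by (rule eq_matI) (auto simp: index_pad_one)

lemma pad_one_pad_one[simp]: "pad_one (pad_one M a) b = pad_one M (a + b)"
  by (rule eq_matI) (auto simp: index_pad_one)

lemma pad_one_mult:
  fixes A :: "'a::semiring_1 mat"
  assumes "A \<in> carrier_mat r s" and "B \<in> carrier_mat s t"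
  shows "pad_one A k * pad_one B k = pad_one (A * B) k"
  unfolding pad_one_def using assms
  by (subst mult_four_block_mat[of A r s _ k _ k _ B t _ k]) auto

lemma map_mat_pad_one: "map_mat of_int (pad_one M k) = pad_one (map_mat of_int M) k"
  by (rule eq_matI) (auto simp: index_pad_one)

lemma pad_one_mult_append_vec:
  fixes M :: "'a::semiring_1 mat"
  assumes "M \<in> carrier_mat r c" and "w \<in> carrier_vec c" and "u \<in> carrier_vec k"
  shows "pad_one M k *\<^sub>v (w @\<^sub>v u) = (M *\<^sub>v w) @\<^sub>v u"
  unfolding pad_one_def using assms
  by (subst four_block_mat_mult_vec[of M r c _ k _ k]) auto

lemma foldr_mult_carrier_mat:
  "\<forall>k\<in>set L. D k \<in> carrier_mat d d \<Longrightarrow> X \<in> carrier_mat d e \<Longrightarrow>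
   foldr (\<lambda>k M. D k * M) L X \<in> carrier_mat d e"
  by (induction L) auto

lemma foldr_mult_eq_mult:
  fixes D :: "'b \<Rightarrow> 'a::semiring_1 mat"
  assumes "\<forall>k\<in>set L. D k \<in> carrier_mat d d" and "X \<in> carrier_mat d e"
  shows "foldr (\<lambda>k M. D k * M) L X = foldr (\<lambda>k M. D k * M) L (1\<^sub>m d) * X"
  using assms
proof (induction L)
  case (Cons a L)
  have "foldr (\<lambda>k M. D k * M) L (1\<^sub>m d) \<in> carrier_mat d d"
    using Cons.prems by (intro foldr_mult_carrier_mat) auto
  with Cons show ?case by (simp add: assoc_mult_mat[of _ d d _ d _ e])
qed simp

lemma foldr_pad_one:
  fixes D :: "'b \<Rightarrow> 'a::semiring_1 mat"
  assumes "\<forall>k\<in>set L. D k \<in> carrier_mat d d"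
  shows "foldr (\<lambda>k M. pad_one (D k) 1 * M) L (1\<^sub>m (d + 1))
    = pad_one (foldr (\<lambda>k M. D k * M) L (1\<^sub>m d)) 1"
  using assms
proof (induction L)
  case (Cons a L)
  have "foldr (\<lambda>k M. D k * M) L (1\<^sub>m d) \<in> carrier_mat d d"
    using Cons.prems by (intro foldr_mult_carrier_mat) auto
  with Cons show ?case by (simp add: pad_one_mult[of _ d d _ d])
qed simp

lemma mat_inv_eqI:
  assumes M: "M \<in> carrier_mat k k" and B: "B \<in> carrier_mat k k" and MB: "M * B = 1\<^sub>m k"
  shows "mat_inv k M = B"
  unfolding mat_inv_def
proof (rule the_equality)
  show "B \<in> carrier_mat k k \<and> M * B = 1\<^sub>m k \<and> B * M = 1\<^sub>m k"
    using B MB mat_mult_left_right_inverse[OF M B MB] by auto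
next
  fix B' assume B': "B' \<in> carrier_mat k k \<and> M * B' = 1\<^sub>m k \<and> B' * M = 1\<^sub>m k"
  then have "B' = B' * (M * B)" using MB right_mult_one_mat[of B' k k] by simp
  also have "\<dots> = (B' * M) * B"
    using B' M B by (intro assoc_mult_mat[symmetric, of B' k k M k B k]) auto
  finally show "B' = B" using B' B by simp
qed

lemma mat_inv_inverse:
  assumes M: "M \<in> carrier_mat k k" and "det M \<noteq> 0"
  shows "mat_inv k M \<in> carrier_mat k k" and "M * mat_inv k M = 1\<^sub>m k" and "mat_inv k M * M = 1\<^sub>m k"
proof -
  define B where "B = (1 / det M) \<cdot>\<^sub>m adj_mat M"
  have B: "B \<in> carrier_mat k k" unfolding B_def using adj_mat(1)[OF M] by simp
  have "M * B = (1 / det M) \<cdot>\<^sub>m (det M \<cdot>\<^sub>m 1\<^sub>m k)"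
    unfolding B_def using M adj_mat[OF M] by (simp add: mult_smult_distrib)
  also have "\<dots> = 1\<^sub>m k" using \<open>det M \<noteq> 0\<close> by (intro eq_matI) auto
  finally have MB: "M * B = 1\<^sub>m k" .
  show "mat_inv k M \<in> carrier_mat k k" "M * mat_inv k M = 1\<^sub>m k" "mat_inv k M * M = 1\<^sub>m k"
    unfolding mat_inv_eqI[OF M B MB] using B MB mat_mult_left_right_inverse[OF M B MB] by auto
qed

lemma Acomb_carrier_mat: "Acomb Ab c n \<in> carrier_mat (n+2) (n+2)"
  unfolding Acomb_def by simp

text \<open>The inverse of Amat n, computed as an integer matrix; its determinant is a common
  denominator of the entries of Amat n.\<close>
fun Pmat :: "(nat \<Rightarrow> int mat) \<Rightarrow> (nat \<Rightarrow> int vec) \<Rightarrow> nat \<Rightarrow> int mat" where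
  "Pmat Ab c 0 = 1\<^sub>m 1"
| "Pmat Ab c (Suc n) = Acomb Ab c n * pad_one (Pmat Ab c n) 1"

lemma Pmat_carrier_mat: "Pmat Ab c n \<in> carrier_mat (n+1) (n+1)"
proof (induction n)
  case (Suc n)
  then have "pad_one (Pmat Ab c n) 1 \<in> carrier_mat (n+2) (n+2)"
    using pad_one_carrier_mat[OF Suc.IH, of 1] by simp
  then show ?case using Acomb_carrier_mat[of Ab c n] by simp
qed simp

locale completion_data =
  fixes Ab :: "nat \<Rightarrow> int mat" and c :: "nat \<Rightarrow> int vec"
  assumes Ab_carrier_mat: "Ab n \<in> carrier_mat (n+2) (n+1)"
    and det_Acomb: "det (Acomb Ab c n) \<noteq> 0"
begin

abbreviation Acomb_rat :: "nat \<Rightarrow> rat mat" where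
  "Acomb_rat n \<equiv> map_mat rat_of_int (Acomb Ab c n)"

abbreviation Acomb_inv :: "nat \<Rightarrow> rat mat" where
  "Acomb_inv n \<equiv> mat_inv (n+2) (Acomb_rat n)"

abbreviation Pmat_rat :: "nat \<Rightarrow> rat mat" where
  "Pmat_rat n \<equiv> map_mat rat_of_int (Pmat Ab c n)"

lemma Acomb_inv_inverse:
  "Acomb_inv n \<in> carrier_mat (n+2) (n+2)"
  "Acomb_rat n * Acomb_inv n = 1\<^sub>m (n+2)"
  "Acomb_inv n * Acomb_rat n = 1\<^sub>m (n+2)"
  using mat_inv_inverse[of "Acomb_rat n"] Acomb_carrier_mat det_Acomb by (auto simp: of_int_hom.hom_det)

lemma Acomb_mult_append_zero:
  assumes w: "w \<in> carrier_vec (n+1)"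
  shows "Acomb_rat n *\<^sub>v (w @\<^sub>v 0\<^sub>v 1) = map_mat rat_of_int (Ab n) *\<^sub>v w"
proof (rule eq_vecI)
  fix i assume "i < dim_vec (map_mat rat_of_int (Ab n) *\<^sub>v w)"
  then have i: "i < n+2" using Ab_carrier_mat[of n] by simp
  have "(Acomb_rat n *\<^sub>v (w @\<^sub>v 0\<^sub>v 1)) $ i
      = (\<Sum>j<n+2. Acomb_rat n $$ (i,j) * (w @\<^sub>v 0\<^sub>v 1) $ j)"
    using Acomb_carrier_mat[of Ab c n] w i by (simp add: scalar_prod_def atLeast0LessThan)
  also have "\<dots> = (\<Sum>j<n+1. rat_of_int (Ab n $$ (i,j)) * w $ j)"
    using w i by (simp add: Acomb_def)
  also have "\<dots> = (map_mat rat_of_int (Ab n) *\<^sub>v w) $ i"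
    using Ab_carrier_mat[of n] w i by (simp add: scalar_prod_def atLeast0LessThan)
  finally show "(Acomb_rat n *\<^sub>v (w @\<^sub>v 0\<^sub>v 1)) $ i = (map_mat rat_of_int (Ab n) *\<^sub>v w) $ i" .
qed (use Ab_carrier_mat[of n] Acomb_carrier_mat[of Ab c n] in simp)

lemma Amat_factors_carrier_mat:
  "\<forall>k\<in>set [0..<n]. dsum (Acomb_inv k) (n-1-k) \<in> carrier_mat (n+1) (n+1)"
proof
  fix k assume "k \<in> set [0..<n]"
  then show "dsum (Acomb_inv k) (n-1-k) \<in> carrier_mat (n+1) (n+1)"
    using pad_one_carrier_mat[OF Acomb_inv_inverse(1), of k "n-1-k"] by (simp add: dsum_eq_pad_one)
qed

lemma Amat_carrier_mat: "Amat Ab c n \<in> carrier_mat (n+1) (n+1)"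
  unfolding Amat_def by (rule foldr_mult_carrier_mat[OF Amat_factors_carrier_mat]) simp

lemma Amat_mult_vec_carrier_vec:
  "Amat Ab c n *\<^sub>v w \<in> carrier_vec (n+1)"
  using Amat_carrier_mat[of n] by (intro carrier_vecI) auto

lemma Amat_0: "Amat Ab c 0 = 1\<^sub>m 1"
  unfolding Amat_def by simp

lemma Amat_Suc: "Amat Ab c (Suc n) = pad_one (Amat Ab c n) 1 * Acomb_inv n"
proof -
  let ?D = "\<lambda>k. dsum (Acomb_inv k) (n-k)"
  have D: "\<forall>k\<in>set [0..<n]. ?D k \<in> carrier_mat (n+2) (n+2)"
    using Amat_factors_carrier_mat[of "Suc n"] by auto
  have "Amat Ab c (Suc n) = foldr (\<lambda>k M. ?D k * M) [0..<n] (Acomb_inv n)"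
    unfolding Amat_def using Acomb_inv_inverse(1)[of n] by (simp add: dsum_eq_pad_one)
  also have "\<dots> = foldr (\<lambda>k M. ?D k * M) [0..<n] (1\<^sub>m (n+2)) * Acomb_inv n"
    using D Acomb_inv_inverse(1) by (intro foldr_mult_eq_mult) auto
  also have "foldr (\<lambda>k M. ?D k * M) [0..<n] (1\<^sub>m (n+2))
      = foldr (\<lambda>k M. pad_one (dsum (Acomb_inv k) (n-1-k)) 1 * M) [0..<n] (1\<^sub>m (n+1+1))"
    by (rule foldr_cong) (auto simp: dsum_eq_pad_one Suc_diff_Suc)
  also have "\<dots> = pad_one (Amat Ab c n) 1"
    unfolding Amat_def by (rule foldr_pad_one[OF Amat_factors_carrier_mat])
  finally show ?thesis .
qed

lemma Amat_mult_Pmat: "Amat Ab c n * Pmat_rat n = 1\<^sub>m (n+1)"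
proof (induction n)
  case 0
  then show ?case by (simp add: Amat_0 of_int_hom.mat_hom_one)
next
  case (Suc n)
  have A: "pad_one (Amat Ab c n) 1 \<in> carrier_mat (n+2) (n+2)"
    using pad_one_carrier_mat[OF Amat_carrier_mat[of n], of 1] by simp
  have P_int: "pad_one (Pmat Ab c n) 1 \<in> carrier_mat (n+2) (n+2)"
    using pad_one_carrier_mat[OF Pmat_carrier_mat[of Ab c n], of 1] by simp
  then have P: "pad_one (Pmat_rat n) 1 \<in> carrier_mat (n+2) (n+2)"
    by (simp flip: map_mat_pad_one)
  have C: "Acomb_rat n \<in> carrier_mat (n+2) (n+2)"
    using Acomb_carrier_mat by simp
  have "Pmat_rat (Suc n) = Acomb_rat n * pad_one (Pmat_rat n) 1"
    using of_int_hom.mat_hom_mult[OF Acomb_carrier_mat P_int] by (simp add: map_mat_pad_one)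
  then have "Amat Ab c (Suc n) * Pmat_rat (Suc n)
      = pad_one (Amat Ab c n) 1 * ((Acomb_inv n * Acomb_rat n) * pad_one (Pmat_rat n) 1)"
    using A P C Acomb_inv_inverse(1) by (simp add: Amat_Suc assoc_mult_mat[of _ "n+2" "n+2" _ "n+2" _ "n+2"])
  also have "\<dots> = pad_one (Amat Ab c n * Pmat_rat n) 1"
    using Acomb_inv_inverse(3) P Amat_carrier_mat Pmat_carrier_mat[of Ab c n]
    by (simp add: pad_one_mult[of _ "n+1" "n+1" _ "n+1"])
  finally show ?case using Suc.IH by simp
qed

lemma Pmat_mult_Amat: "Pmat_rat n * Amat Ab c n = 1\<^sub>m (n+1)"
  using mat_mult_left_right_inverse[OF Amat_carrier_mat _ Amat_mult_Pmat] Pmat_carrier_mat by simp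

lemma det_mat_inv_Amat: "det (mat_inv (n+1) (Amat Ab c n)) = rat_of_int (det (Pmat Ab c n))"
  using mat_inv_eqI[OF Amat_carrier_mat _ Amat_mult_Pmat] Pmat_carrier_mat
  by (simp add: of_int_hom.hom_det)

lemma det_Pmat_nonzero: "det (Pmat Ab c n) \<noteq> 0"
proof
  assume "det (Pmat Ab c n) = 0"
  then have "det (Amat Ab c n * Pmat_rat n) = 0"
    using det_mult[OF Amat_carrier_mat, of "Pmat_rat n"] Pmat_carrier_mat by (simp add: of_int_hom.hom_det)
  then show False unfolding Amat_mult_Pmat by simp
qed

lemma det_Pmat_smult_Amat:
  "rat_of_int (det (Pmat Ab c n)) \<cdot>\<^sub>m Amat Ab c n = map_mat rat_of_int (adj_mat (Pmat Ab c n))"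
proof -
  let ?d = "rat_of_int (det (Pmat Ab c n))"
  let ?adj = "map_mat rat_of_int (adj_mat (Pmat Ab c n))"
  have adj: "adj_mat (Pmat Ab c n) \<in> carrier_mat (n+1) (n+1)"
    using adj_mat(1)[OF Pmat_carrier_mat] .
  have "Pmat_rat n * ?adj = map_mat rat_of_int (Pmat Ab c n * adj_mat (Pmat Ab c n))"
    by (rule of_int_hom.mat_hom_mult[symmetric, OF Pmat_carrier_mat adj])
  also have "\<dots> = ?d \<cdot>\<^sub>m 1\<^sub>m (n+1)"
    unfolding adj_mat(2)[OF Pmat_carrier_mat] by (rule eq_matI) auto
  finally have P_adj: "Pmat_rat n * ?adj = ?d \<cdot>\<^sub>m 1\<^sub>m (n+1)" .
  have "?d \<cdot>\<^sub>m Amat Ab c n = Amat Ab c n * (Pmat_rat n * ?adj)"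
    unfolding P_adj using Amat_carrier_mat[of n]
    by (simp add: mult_smult_distrib[of _ "n+1" "n+1" _ "n+1"] right_mult_one_mat[OF Amat_carrier_mat])
  also have "\<dots> = (Amat Ab c n * Pmat_rat n) * ?adj"
    using Amat_carrier_mat Pmat_carrier_mat adj
    by (intro assoc_mult_mat[symmetric, of _ "n+1" "n+1" _ "n+1" _ "n+1"]) auto
  also have "\<dots> = ?adj"
    unfolding Amat_mult_Pmat using adj by simp
  finally show ?thesis .
qed

lemma det_Pmat_mult_Amat_mult_vec_Ints:
  assumes v: "v \<in> carrier_vec (n+1)" and l: "l < n+1"
  shows "rat_of_int (det (Pmat Ab c n)) * (Amat Ab c n *\<^sub>v map_vec rat_of_int v) $ l \<in> \<int>"
proof -
  let ?d = "rat_of_int (det (Pmat Ab c n))"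
  have adj: "adj_mat (Pmat Ab c n) \<in> carrier_mat (n+1) (n+1)"
    using adj_mat(1)[OF Pmat_carrier_mat] .
  have "?d * (Amat Ab c n *\<^sub>v map_vec rat_of_int v) $ l
      = (\<Sum>j<n+1. (?d \<cdot>\<^sub>m Amat Ab c n) $$ (l,j) * rat_of_int (v $ j))"
    using Amat_carrier_mat[of n] v l
    by (simp add: scalar_prod_def atLeast0LessThan sum_distrib_left distrib_left mult.assoc)
  also have "\<dots> = (\<Sum>j<n+1. rat_of_int (adj_mat (Pmat Ab c n) $$ (l,j) * v $ j))"
    unfolding det_Pmat_smult_Amat using adj l by simp
  also have "\<dots> \<in> \<int>"
    by (intro Ints_sum Ints_of_int)
  finally show ?thesis .
qed

lemma Amat_Suc_mult_Ab:
  assumes v: "v \<in> carrier_vec (n+1)"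
  shows "Amat Ab c (Suc n) *\<^sub>v map_vec rat_of_int (Ab n *\<^sub>v v)
    = (Amat Ab c n *\<^sub>v map_vec rat_of_int v) @\<^sub>v 0\<^sub>v 1"
proof -
  let ?w = "map_vec rat_of_int v @\<^sub>v 0\<^sub>v 1"
  have w: "?w \<in> carrier_vec (n+2)"
    using v append_carrier_vec[of "map_vec rat_of_int v" "n+1" "0\<^sub>v 1" 1] by simp
  have A: "pad_one (Amat Ab c n) 1 \<in> carrier_mat (n+2) (n+2)"
    using pad_one_carrier_mat[OF Amat_carrier_mat[of n], of 1] by simp
  have C: "Acomb_rat n \<in> carrier_mat (n+2) (n+2)"
    using Acomb_carrier_mat by simp
  have Ab_v: "map_vec rat_of_int (Ab n *\<^sub>v v) = Acomb_rat n *\<^sub>v ?w"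
    using of_int_hom.mult_mat_vec_hom[OF Ab_carrier_mat v] Acomb_mult_append_zero v by simp
  have "Amat Ab c (Suc n) *\<^sub>v map_vec rat_of_int (Ab n *\<^sub>v v)
      = pad_one (Amat Ab c n) 1 *\<^sub>v (Acomb_inv n *\<^sub>v (Acomb_rat n *\<^sub>v ?w))"
    unfolding Amat_Suc Ab_v using C w by (intro assoc_mult_mat_vec[OF A Acomb_inv_inverse(1)]) auto
  also have "Acomb_inv n *\<^sub>v (Acomb_rat n *\<^sub>v ?w) = (Acomb_inv n * Acomb_rat n) *\<^sub>v ?w"
    using C w by (intro assoc_mult_mat_vec[symmetric, OF Acomb_inv_inverse(1)]) auto
  also have "\<dots> = ?w"
    unfolding Acomb_inv_inverse(3) using w by simp
  also have "pad_one (Amat Ab c n) 1 *\<^sub>v ?w = (Amat Ab c n *\<^sub>v map_vec rat_of_int v) @\<^sub>v 0\<^sub>v 1"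
    using v by (intro pad_one_mult_append_vec[OF Amat_carrier_mat]) auto
  finally show ?thesis .
qed


lemma phi_to_carrier_vec:
  "v \<in> carrier_vec (n+1) \<Longrightarrow> n \<le> k \<Longrightarrow> phi_to Ab n k v \<in> carrier_vec (k+1)"
proof (induction k)
  case (Suc k)
  show ?case
  proof (cases "Suc k \<le> n")
    case True
    then have "n = Suc k" using Suc.prems by simp
    with True show ?thesis using Suc.prems(1) by simp
  next
    case False
    then have "phi_to Ab n k v \<in> carrier_vec (k+1)" using Suc by simp
    then show ?thesis using False Ab_carrier_mat[of k] by simp
  qed
qed simp

end

lemma indicator_Bset_eq:
  "x \<in> Xmin E \<Longrightarrow> y \<in> Xmin E \<Longrightarrow> x l = y l \<Longrightarrow>
   indicator (Bset E i l) x = indicator (Bset E i l) y"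
  unfolding Bset_def indicator_def by simp

lemma topspace_Xtop: "topspace (Xtop E) = Xmin E"
proof -
  have "\<Union>{Bset E i n | i n. Bset E i n \<noteq> {}} = Xmin E"
  proof
    show "\<Union>{Bset E i n | i n. Bset E i n \<noteq> {}} \<subseteq> Xmin E"
      unfolding Bset_def by auto
    show "Xmin E \<subseteq> \<Union>{Bset E i n | i n. Bset E i n \<noteq> {}}"
    proof
      fix x assume "x \<in> Xmin E"
      then have "x \<in> Bset E (x 0) 0" unfolding Bset_def by simp
      then show "x \<in> \<Union>{Bset E i n | i n. Bset E i n \<noteq> {}}" by blast
    qed
  qed
  then show ?thesis unfolding Xtop_def by simp
qed

lemma openin_Xtop_Bset:
  assumes "x \<in> Xmin E"
  shows "openin (Xtop E) (Bset E (x n) n)"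
proof -
  have "x \<in> Bset E (x n) n" using assms unfolding Bset_def by simp
  then show ?thesis unfolding Xtop_def by (intro topology_generated_by_Basis) blast
qed

lemma level_determined_in_Cfun:
  assumes G: "\<forall>x\<in>Xmin E. f x \<in> G"
    and level: "\<And>x y. x \<in> Xmin E \<Longrightarrow> y \<in> Xmin E \<Longrightarrow> x n = y n \<Longrightarrow> f x = f y"
  shows "f \<in> Cfun E G"
  unfolding Cfun_def mem_Collect_eq continuous_map_def topspace_Xtop
proof (intro conjI allI impI)
  show "f \<in> Xmin E \<rightarrow> topspace (discrete_topology G)" using G by auto
next
  fix U
  show "openin (Xtop E) {x \<in> Xmin E. f x \<in> U}"
  proof (subst openin_subopen, intro ballI)
    fix x assume x: "x \<in> {x \<in> Xmin E. f x \<in> U}"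
    have "Bset E (x n) n \<subseteq> {x \<in> Xmin E. f x \<in> U}"
    proof
      fix y assume "y \<in> Bset E (x n) n"
      then have "y \<in> Xmin E" and "f y = f x"
        using x level[of y x] unfolding Bset_def by auto
      then show "y \<in> {x \<in> Xmin E. f x \<in> U}" using x by simp
    qed
    moreover have "x \<in> Bset E (x n) n" using x unfolding Bset_def by simp
    ultimately show "\<exists>T. openin (Xtop E) T \<and> x \<in> T \<and> T \<subseteq> {x \<in> Xmin E. f x \<in> U}"
      using openin_Xtop_Bset x by blast
  qed
qed

lemma Rmap_append_zero:
  assumes u: "u \<in> carrier_vec (n+1)"
  shows "Rmap E (Suc n) (u @\<^sub>v 0\<^sub>v 1) = Rmap E n u"
proof (rule ext)
  fix x
  have "Rmap E (Suc n) (u @\<^sub>v 0\<^sub>v 1) x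
      = (\<Sum>l\<le>n. (u @\<^sub>v 0\<^sub>v 1) $ l * indicator (Bset E (rr E l) l) x)"
    unfolding Rmap_def using u by (simp add: sum.atMost_Suc)
  also have "\<dots> = Rmap E n u x"
    unfolding Rmap_def using u by (intro sum.cong refl) simp
  finally show "Rmap E (Suc n) (u @\<^sub>v 0\<^sub>v 1) x = Rmap E n u x" .
qed

lemma Rmap_add:
  assumes "a \<in> carrier_vec (n+1)" and "b \<in> carrier_vec (n+1)"
  shows "Rmap E n (a + b) = (\<lambda>x. Rmap E n a x + Rmap E n b x)"
proof (rule ext)
  fix x
  have "Rmap E n (a + b) x = (\<Sum>l\<le>n. a $ l * indicator (Bset E (rr E l) l) x
      + b $ l * indicator (Bset E (rr E l) l) x)"
    unfolding Rmap_def using assms by (intro sum.cong refl) (simp add: distrib_right)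
  then show "Rmap E n (a + b) x = Rmap E n a x + Rmap E n b x"
    unfolding Rmap_def by (simp add: sum.distrib)
qed

locale minimal_reduction_graph =
  fixes E :: "nat \<Rightarrow> nat \<Rightarrow> nat \<Rightarrow> bool"
  assumes edge_range: "E n j i \<Longrightarrow> j \<in> {1..n+1} \<and> i \<in> {1..n+2}"
    and unique_parent: "i \<in> {1..n+2} \<Longrightarrow> \<exists>!j. E n j i"
    and has_child: "j \<in> {1..n+1} \<Longrightarrow> \<exists>i. E n j i"

lemma minimal_reduction_graphI:
  assumes "min_reduction Ab E"
  shows "minimal_reduction_graph E"
proof
  fix n j i :: nat assume "E n j i"
  then show "j \<in> {1..n+1} \<and> i \<in> {1..n+2}"
    using assms unfolding min_reduction_def by blast
next
  fix i n :: nat assume "i \<in> {1..n+2}"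
  then show "\<exists>!j. E n j i"
    using assms unfolding min_reduction_def by blast
next
  fix j n :: nat assume "j \<in> {1..n+1}"
  then show "\<exists>i. E n j i"
    using assms unfolding min_reduction_def by blast
qed

context minimal_reduction_graph
begin

lemma edge_unique: "E n j i \<Longrightarrow> E n j' i \<Longrightarrow> j = j'"
  using edge_range unique_parent by blast

lemma Xmin_eq_below:
  assumes x: "x \<in> Xmin E" and y: "y \<in> Xmin E" and eq: "x n = y n" and "l \<le> n"
  shows "x l = y l"
  using \<open>l \<le> n\<close>
proof (induction rule: inc_induct)
  case (step k)
  have "E k (x k) (x (Suc k))" "E k (y k) (y (Suc k))"
    using x y unfolding Xmin_def by auto
  then show ?case using step edge_unique by metis
qed (fact eq)

lemma finite_path_extends:
  assumes p0: "p 0 = 1" and p: "\<forall>l<m. E l (p l) (p (Suc l))"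
  shows "\<exists>x\<in>Xmin E. \<forall>l\<le>m. x l = p l"
proof -
  define x where "x = rec_nat 1 (\<lambda>k xk. if Suc k \<le> m then p (Suc k) else (SOME i. E k xk i))"
  have x0: "x 0 = 1"
    and xS: "x (Suc k) = (if Suc k \<le> m then p (Suc k) else (SOME i. E k (x k) i))" for k
    unfolding x_def by simp_all
  have xp: "k \<le> m \<Longrightarrow> x k = p k" for k
    by (cases k) (auto simp: x0 p0 xS)
  have xE: "E k (x k) (x (Suc k))" if xk: "x k \<in> {1..k+1}" for k
  proof (cases "Suc k \<le> m")
    case True
    then show ?thesis using p xp xS by simp
  next
    case False
    obtain i where "E k (x k) i" using has_child[OF xk] by blast
    then show ?thesis using xS False by (metis someI)
  qed
  have x_range: "x k \<in> {1..k+1}" for k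
  proof (induction k)
    case (Suc k)
    show ?case using edge_range[OF xE[OF Suc.IH]] by simp
  qed (simp add: x0)
  have "x \<in> Xmin E" unfolding Xmin_def using x0 xE x_range by simp
  then show ?thesis using xp by blast
qed

lemma path_to_vertex:
  "i \<in> {1..m+1} \<Longrightarrow> \<exists>p. p 0 = 1 \<and> p m = i \<and> (\<forall>l<m. E l (p l) (p (Suc l)))"
proof (induction m arbitrary: i)
  case 0
  then show ?case by (intro exI[of _ "\<lambda>_. 1"]) auto
next
  case (Suc m)
  obtain j where j: "E m j i" using unique_parent[of i m] Suc.prems by auto
  then obtain p where p: "p 0 = 1" "p m = j" "\<forall>l<m. E l (p l) (p (Suc l))"
    using Suc.IH edge_range by blast
  show ?case
    by (rule exI[of _ "p(Suc m := i)"]) (use p j in \<open>auto simp: less_Suc_eq\<close>)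
qed

definition parent :: "nat \<Rightarrow> nat \<Rightarrow> nat" where
  "parent n i = (THE j. E n j i)"

lemma parent_edge: "i \<in> {1..n+2} \<Longrightarrow> E n (parent n i) i"
  unfolding parent_def using unique_parent by (metis theI)

lemma parent_eqI: "E n j i \<Longrightarrow> parent n i = j"
  using parent_edge edge_range edge_unique by blast

lemma parent_image: "parent n ` {1..n+2} = {1..n+1}"
proof
  show "parent n ` {1..n+2} \<subseteq> {1..n+1}"
    using parent_edge edge_range by blast
  show "{1..n+1} \<subseteq> parent n ` {1..n+2}"
  proof
    fix j assume "j \<in> {1..n+1}"
    then obtain i where "E n j i" using has_child by blast
    then have "i \<in> {1..n+2}" and "j = parent n i"
      using edge_range parent_eqI by auto
    then show "j \<in> parent n ` {1..n+2}" by blast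
  qed
qed

lemma siblings_exist: "\<exists>r' r a. r' < r \<and> E n a r' \<and> E n a r"
proof -
  have "\<not> inj_on (parent n) {1..n+2}"
    using parent_image[of n] card_image[of "parent n" "{1..n+2}"] by auto
  then obtain i1 i2 where i: "i1 \<in> {1..n+2}" "i2 \<in> {1..n+2}" "i1 \<noteq> i2"
    and eq: "parent n i1 = parent n i2"
    unfolding inj_on_def by blast
  have "E n (parent n i1) i1" "E n (parent n i1) i2"
    using parent_edge[OF i(1)] parent_edge[OF i(2)] eq by simp_all
  with \<open>i1 \<noteq> i2\<close> show ?thesis by (metis linorder_neqE_nat)
qed

lemma inj_on_parent_Diff:
  assumes "E n a r" and "E n a r'" and "r' \<noteq> r"
  shows "inj_on (parent n) ({1..n+2} - {r})"
proof (rule eq_card_imp_inj_on)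
  have r: "r \<in> {1..n+2}" and r': "r' \<in> {1..n+2} - {r}"
    using assms edge_range by auto
  have "parent n r = parent n r'"
    using assms parent_eqI by metis
  then have "parent n r \<in> parent n ` ({1..n+2} - {r})"
    using r' by blast
  then have "parent n ` ({1..n+2} - {r}) = parent n ` {1..n+2}"
    using r by (metis image_insert insert_Diff insert_absorb)
  then show "card (parent n ` ({1..n+2} - {r})) = card ({1..n+2} - {r})"
    using parent_image[of n] r by simp
qed simp

lemma sibling_pair_contains:
  assumes "E n a r" "E n a r'" "r' \<noteq> r" and s: "E n b s" "E n b s'" "s' \<noteq> s"
  shows "r = s \<or> r = s'"
proof (rule ccontr)
  assume "\<not> (r = s \<or> r = s')"
  then have "s \<in> {1..n+2} - {r}" "s' \<in> {1..n+2} - {r}"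
    using s edge_range by auto
  moreover have "parent n s = parent n s'"
    using s parent_eqI by metis
  ultimately have "s = s'"
    using inj_on_parent_Diff[OF assms(1-3)] by (blast dest: inj_onD)
  with \<open>s' \<noteq> s\<close> show False by simp
qed

lemma larger_sibling_unique:
  assumes 1: "r1' < r1" "E n a1 r1'" "E n a1 r1" and 2: "r2' < r2" "E n a2 r2'" "E n a2 r2"
  shows "r1 = r2"
proof -
  have "r1 = r2 \<or> r1 = r2'" and "r2 = r1 \<or> r2 = r1'"
    using sibling_pair_contains[of n a1 r1 r1' a2 r2 r2'] sibling_pair_contains[of n a2 r2 r2' a1 r1 r1'] 1 2
    by simp_all
  then show ?thesis using 1(1) 2(1) by auto
qed

lemma smaller_sibling_rr_Suc: "\<exists>r' a. r' < rr E (Suc n) \<and> E n a r' \<and> E n a (rr E (Suc n))"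
proof -
  define P where "P r \<longleftrightarrow> (\<exists>r' a. 1 \<le> r' \<and> r' < r \<and> r \<le> Suc n + 1 \<and> 1 \<le> a \<and> a \<le> Suc n
    \<and> E n a r' \<and> E n a r)" for r
  obtain r' r a where sib: "r' < r" "E n a r'" "E n a r"
    using siblings_exist by blast
  then have "P r"
    unfolding P_def using edge_range[of n a r'] edge_range[of n a r] by (intro exI[of _ r'] exI[of _ a]) auto
  moreover have "P r2 \<Longrightarrow> r2 = r" for r2
    unfolding P_def using larger_sibling_unique sib by blast
  ultimately have "P (THE r. P r)"
    by (rule theI)
  moreover have "rr E (Suc n) = (THE r. P r)"
    unfolding rr_def P_def by simp
  ultimately show ?thesis unfolding P_def by auto
qed

lemma paths_separated_by_rr:
  "\<exists>x\<in>Xmin E. \<exists>y\<in>Xmin E.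
     (\<forall>l\<le>n. x l = y l) \<and> x (Suc n) = rr E (Suc n) \<and> y (Suc n) \<noteq> rr E (Suc n)"
proof -
  obtain r' a where r': "r' < rr E (Suc n)" "E n a r'" "E n a (rr E (Suc n))"
    using smaller_sibling_rr_Suc by blast
  then obtain p where p: "p 0 = 1" "p n = a" "\<forall>l<n. E l (p l) (p (Suc l))"
    using path_to_vertex edge_range by blast
  have "\<exists>x\<in>Xmin E. \<forall>l\<le>Suc n. x l = (p(Suc n := r)) l" if "E n a r" for r
    using p that by (intro finite_path_extends) (auto simp: less_Suc_eq)
  from this[OF r'(3)] this[OF r'(2)] obtain x y where
    x: "x \<in> Xmin E" "\<forall>l\<le>Suc n. x l = (p(Suc n := rr E (Suc n))) l" and
    y: "y \<in> Xmin E" "\<forall>l\<le>Suc n. y l = (p(Suc n := r')) l"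
    by blast
  then have "(\<forall>l\<le>n. x l = y l) \<and> x (Suc n) = rr E (Suc n) \<and> y (Suc n) \<noteq> rr E (Suc n)"
    using r'(1) by auto
  then show ?thesis using x(1) y(1) by blast
qed

lemma indicator_rr_independent:
  fixes a :: "nat \<Rightarrow> 'a::ring_1"
  assumes "\<forall>x\<in>Xmin E. (\<Sum>l\<le>n. a l * indicator (Bset E (rr E l) l) x) = 0"
  shows "\<forall>l\<le>n. a l = 0"
  using assms
proof (induction n)
  case 0
  obtain x where x: "x \<in> Xmin E"
    using finite_path_extends[of "\<lambda>_. 1" 0] by auto
  then have "x \<in> Bset E (rr E 0) 0"
    unfolding Bset_def rr_def Xmin_def by simp
  then show ?case using bspec[OF "0.prems" x] by simp
next
  case (Suc n)
  let ?S = "\<lambda>x. \<Sum>l\<le>n. a l * indicator (Bset E (rr E l) l) x"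
  obtain x y where x: "x \<in> Xmin E" "x (Suc n) = rr E (Suc n)"
    and y: "y \<in> Xmin E" "y (Suc n) \<noteq> rr E (Suc n)" and xy: "\<forall>l\<le>n. x l = y l"
    using paths_separated_by_rr by blast
  have "?S x = ?S y"
  proof (rule sum.cong)
    fix l assume "l \<in> {..n}"
    then have "x l = y l" using xy by simp
    then show "a l * indicator (Bset E (rr E l) l) x = a l * indicator (Bset E (rr E l) l) y"
      by (simp only: indicator_Bset_eq[OF x(1) y(1)])
  qed simp
  moreover have "?S x + a (Suc n) = 0" "?S y = 0"
    using Suc.prems x y by (auto simp: Bset_def)
  ultimately have "a (Suc n) = 0" by simp
  with Suc show ?case by (auto simp: le_Suc_eq)
qed

lemma Rmap_level_determined:
  assumes "x \<in> Xmin E" "y \<in> Xmin E" "x n = y n"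
  shows "Rmap E n \<alpha> x = Rmap E n \<alpha> y"
  unfolding Rmap_def using assms
  by (intro sum.cong refl) (metis indicator_Bset_eq Xmin_eq_below atMost_iff)

lemma Rmap_inj:
  assumes "a \<in> carrier_vec (n+1)" "b \<in> carrier_vec (n+1)" and eq: "Rmap E n a = Rmap E n b"
  shows "a = b"
proof -
  have "\<forall>x\<in>Xmin E. (\<Sum>l\<le>n. (a $ l - b $ l) * indicator (Bset E (rr E l) l) x) = (0::rat)"
    using eq unfolding Rmap_def by (simp add: fun_eq_iff left_diff_distrib sum_subtractf)
  from indicator_rr_independent[OF this] show "a = b"
    using assms by (intro eq_vecI) auto
qed

end

lemma K0_iff_iota: "X \<in> K0 Ab \<longleftrightarrow> (\<exists>n v. v \<in> carrier_vec (n+1) \<and> X = iota Ab n v)"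
  unfolding K0_def quotient_def iota_def lim_dom_def by auto

locale bratteli_completion = completion_data Ab c + minimal_reduction_graph E
  for Ab :: "nat \<Rightarrow> int mat" and c :: "nat \<Rightarrow> int vec" and E :: "nat \<Rightarrow> nat \<Rightarrow> nat \<Rightarrow> bool"
begin

abbreviation \<Phi> :: "nat \<Rightarrow> int vec \<Rightarrow> (nat \<Rightarrow> nat) \<Rightarrow> rat" where
  "\<Phi> \<equiv> Phi Ab c E"

lemma Phi_Ab_mult:
  assumes "v \<in> carrier_vec (n+1)"
  shows "\<Phi> (Suc n) (Ab n *\<^sub>v v) = \<Phi> n v"
  unfolding Phi_def Amat_Suc_mult_Ab[OF assms] Rmap_append_zero[OF Amat_mult_vec_carrier_vec] ..

lemma Phi_add:
  assumes v: "v \<in> carrier_vec (n+1)" and w: "w \<in> carrier_vec (n+1)"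
  shows "\<Phi> n (v + w) = (\<lambda>x. \<Phi> n v x + \<Phi> n w x)"
proof -
  have "map_vec rat_of_int (v + w) = map_vec rat_of_int v + map_vec rat_of_int w"
    using v w by (intro eq_vecI) auto
  then have "Amat Ab c n *\<^sub>v map_vec rat_of_int (v + w)
      = Amat Ab c n *\<^sub>v map_vec rat_of_int v + Amat Ab c n *\<^sub>v map_vec rat_of_int w"
    using v w by (simp add: mult_add_distrib_mat_vec[OF Amat_carrier_mat])
  then show ?thesis
    unfolding Phi_def using v w Amat_carrier_mat[of n] by (simp add: Rmap_add)
qed

lemma inj_on_Phi: "inj_on (\<Phi> n) (carrier_vec (n+1))"
proof (rule inj_onI)
  fix v w assume v: "v \<in> carrier_vec (n+1)" and w: "w \<in> carrier_vec (n+1)" and "\<Phi> n v = \<Phi> n w"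
  then have "Amat Ab c n *\<^sub>v map_vec rat_of_int v = Amat Ab c n *\<^sub>v map_vec rat_of_int w"
    unfolding Phi_def using Amat_carrier_mat[of n] by (intro Rmap_inj) auto
  then have "(Pmat_rat n * Amat Ab c n) *\<^sub>v map_vec rat_of_int v
      = (Pmat_rat n * Amat Ab c n) *\<^sub>v map_vec rat_of_int w"
    using v w Amat_carrier_mat[of n] Pmat_carrier_mat[of Ab c n]
    by (simp add: assoc_mult_mat_vec[of _ "n+1" "n+1"])
  then have "map_vec rat_of_int v = map_vec rat_of_int w"
    unfolding Pmat_mult_Amat using v w by simp
  then show "v = w" by (rule of_int_hom.vec_hom_inj)
qed

lemma Phi_in_Gset:
  assumes "1 \<le> n" and v: "v \<in> carrier_vec (n+1)"
  shows "\<Phi> n v x \<in> Gset Ab c"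
proof -
  let ?d = "rat_of_int (det (Pmat Ab c n))"
  let ?a = "Amat Ab c n *\<^sub>v map_vec rat_of_int v"
  have "?d * \<Phi> n v x = (\<Sum>l\<le>n. (?d * ?a $ l) * indicator (Bset E (rr E l) l) x)"
    unfolding Phi_def Rmap_def by (simp add: sum_distrib_left mult.assoc)
  also have "\<dots> \<in> \<int>"
  proof (rule Ints_sum)
    fix l assume "l \<in> {..n}"
    then have "?d * ?a $ l \<in> \<int>"
      using det_Pmat_mult_Amat_mult_vec_Ints[OF v] by simp
    moreover have "indicator (Bset E (rr E l) l) x \<in> (\<int> :: rat set)"
      by (simp add: indicator_def)
    ultimately show "?d * ?a $ l * indicator (Bset E (rr E l) l) x \<in> \<int>"
      by (rule Ints_mult)
  qed
  finally obtain k where "?d * \<Phi> n v x = of_int k"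
    by (elim Ints_cases)
  then have "\<Phi> n v x = of_int k / det (mat_inv (n+1) (Amat Ab c n))"
    unfolding det_mat_inv_Amat using det_Pmat_nonzero[of n] by (simp add: field_simps)
  then show ?thesis unfolding Gset_def using \<open>1 \<le> n\<close> by blast
qed

lemma Phi_in_Cfun:
  assumes v: "v \<in> carrier_vec (n+1)"
  shows "\<Phi> n v \<in> Cfun E (Gset Ab c)"
proof -
  have w: "Ab n *\<^sub>v v \<in> carrier_vec (Suc n + 1)"
    using Ab_carrier_mat[of n] v by simp
  \<comment> \<open>Pass to level n+1, as G only collects the denominators of the levels n \<ge> 1.\<close>
  have "\<Phi> (Suc n) (Ab n *\<^sub>v v) \<in> Cfun E (Gset Ab c)"
  proof (rule level_determined_in_Cfun[where n = "Suc n"])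
    show "\<forall>x\<in>Xmin E. \<Phi> (Suc n) (Ab n *\<^sub>v v) x \<in> Gset Ab c"
      using Phi_in_Gset[OF _ w] by simp
    show "\<Phi> (Suc n) (Ab n *\<^sub>v v) x = \<Phi> (Suc n) (Ab n *\<^sub>v v) y"
      if "x \<in> Xmin E" "y \<in> Xmin E" "x (Suc n) = y (Suc n)" for x y
      unfolding Phi_def using that by (rule Rmap_level_determined)
  qed
  then show ?thesis using Phi_Ab_mult[OF v] by simp
qed

lemma Phi_phi_to: "v \<in> carrier_vec (n+1) \<Longrightarrow> n \<le> k \<Longrightarrow> \<Phi> k (phi_to Ab n k v) = \<Phi> n v"
proof (induction k)
  case (Suc k)
  show ?case
  proof (cases "Suc k \<le> n")
    case True
    then have "n = Suc k" using Suc.prems by simp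
    with True show ?thesis using Suc.prems(1) by simp
  next
    case False
    then show ?thesis using Suc Phi_Ab_mult[OF phi_to_carrier_vec[OF Suc.prems(1)]] by simp
  qed
qed simp

lemma lim_rel_iff_Phi_eq:
  assumes v: "v \<in> carrier_vec (n+1)" and w: "w \<in> carrier_vec (m+1)"
  shows "((n,v),(m,w)) \<in> lim_rel Ab \<longleftrightarrow> \<Phi> n v = \<Phi> m w"
proof
  assume "((n,v),(m,w)) \<in> lim_rel Ab"
  then obtain k where k: "n \<le> k" "m \<le> k" and eq: "phi_to Ab n k v = phi_to Ab m k w"
    unfolding lim_rel_def by auto
  have "\<Phi> n v = \<Phi> k (phi_to Ab n k v)"
    using Phi_phi_to[OF v k(1)] by simp
  also have "\<dots> = \<Phi> m w"
    unfolding eq using Phi_phi_to[OF w k(2)] .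
  finally show "\<Phi> n v = \<Phi> m w" .
next
  assume eq: "\<Phi> n v = \<Phi> m w"
  let ?k = "max n m"
  have "phi_to Ab n ?k v = phi_to Ab m ?k w"
    using inj_onD[OF inj_on_Phi, of ?k] eq v w phi_to_carrier_vec Phi_phi_to by simp
  then show "((n,v),(m,w)) \<in> lim_rel Ab"
    unfolding lim_rel_def lim_dom_def using v w by (auto intro!: exI[of _ ?k])
qed

lemma iota_eq:
  assumes v: "v \<in> carrier_vec (n+1)"
  shows "iota Ab n v = {(m,w) \<in> lim_dom. \<Phi> m w = \<Phi> n v}"
proof (rule Set.set_eqI)
  fix p :: "nat \<times> int vec"
  obtain m w where p: "p = (m,w)" by fastforce
  have "((n,v),(m,w)) \<in> lim_rel Ab \<longleftrightarrow> (m,w) \<in> lim_dom \<and> \<Phi> m w = \<Phi> n v"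
  proof (cases "(m,w) \<in> lim_dom")
    case True
    then have "w \<in> carrier_vec (m+1)" by (simp add: lim_dom_def)
    then show ?thesis using True lim_rel_iff_Phi_eq[OF v] by auto
  next
    case False
    then show ?thesis by (simp add: lim_rel_def)
  qed
  then show "p \<in> iota Ab n v \<longleftrightarrow> p \<in> {(m,w) \<in> lim_dom. \<Phi> m w = \<Phi> n v}"
    unfolding iota_def p by simp
qed

definition Psi :: "(nat \<times> int vec) set \<Rightarrow> (nat \<Rightarrow> nat) \<Rightarrow> rat" where
  "Psi X = case_prod \<Phi> (SOME p. p \<in> X)"

lemma K0_representative:
  assumes "X \<in> K0 Ab" and "(m,w) \<in> X"
  shows "w \<in> carrier_vec (m+1)" and "Psi X = \<Phi> m w"
proof -
  obtain n v where v: "v \<in> carrier_vec (n+1)" "X = iota Ab n v"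
    using assms(1) K0_iff_iota by blast
  have "(SOME p. p \<in> X) \<in> X"
    using assms(2) by (rule someI)
  then show "w \<in> carrier_vec (m+1)" "Psi X = \<Phi> m w"
    using assms(2) unfolding Psi_def v(2) iota_eq[OF v(1)] by (auto simp: lim_dom_def)
qed

lemma Psi_iota:
  assumes v: "v \<in> carrier_vec (n+1)"
  shows "Psi (iota Ab n v) = \<Phi> n v"
proof -
  have "iota Ab n v \<in> K0 Ab" using K0_iff_iota v by blast
  moreover have "(n,v) \<in> iota Ab n v" using iota_eq[OF v] v by (simp add: lim_dom_def)
  ultimately show ?thesis by (rule K0_representative(2))
qed

lemma Psi_in_Cfun: "X \<in> K0 Ab \<Longrightarrow> Psi X \<in> Cfun E (Gset Ab c)"
  using K0_iff_iota Psi_iota Phi_in_Cfun by auto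

lemma K0_some_mem:
  assumes "X \<in> K0 Ab"
  shows "(SOME p. p \<in> X) \<in> X"
proof -
  obtain n v where "v \<in> carrier_vec (n+1)" "X = iota Ab n v"
    using assms K0_iff_iota by blast
  then have "(n,v) \<in> X" using iota_eq by (simp add: lim_dom_def)
  then show ?thesis by (rule someI)
qed

lemma Psi_K0_add:
  assumes X: "X \<in> K0 Ab" and Y: "Y \<in> K0 Ab"
  shows "Psi (K0_add Ab X Y) = (\<lambda>x. Psi X x + Psi Y x)"
proof -
  obtain n v m w where p: "(SOME p. p \<in> X) = (n,v)" and q: "(SOME p. p \<in> Y) = (m,w)"
    by (metis surj_pair)
  have pX: "(n,v) \<in> X" and qY: "(m,w) \<in> Y"
    using K0_some_mem[OF X] K0_some_mem[OF Y] p q by simp_all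
  let ?k = "max n m"
  let ?a = "phi_to Ab n ?k v" and ?b = "phi_to Ab m ?k w"
  have a: "?a \<in> carrier_vec (?k+1)" and b: "?b \<in> carrier_vec (?k+1)"
    using phi_to_carrier_vec K0_representative(1)[OF X pX] K0_representative(1)[OF Y qY] by simp_all
  have "Psi (K0_add Ab X Y) = \<Phi> ?k (?a + ?b)"
    unfolding K0_add_def p q Let_def using a b by (simp add: Psi_iota)
  also have "\<dots> = (\<lambda>x. \<Phi> ?k ?a x + \<Phi> ?k ?b x)"
    by (rule Phi_add[OF a b])
  also have "\<dots> = (\<lambda>x. Psi X x + Psi Y x)"
    using Phi_phi_to K0_representative[OF X pX] K0_representative[OF Y qY] by simp
  finally show ?thesis .
qed

lemma inj_on_Psi: "inj_on Psi (K0 Ab)"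
proof (rule inj_onI)
  fix X Y assume "X \<in> K0 Ab" "Y \<in> K0 Ab" and eq: "Psi X = Psi Y"
  then obtain n v m w where v: "v \<in> carrier_vec (n+1)" "X = iota Ab n v"
    and w: "w \<in> carrier_vec (m+1)" "Y = iota Ab m w"
    using K0_iff_iota by metis
  then have "\<Phi> n v = \<Phi> m w" using eq Psi_iota by simp
  then show "X = Y" using v w iota_eq by simp
qed

lemma Psi_K0_unit: "Psi (K0_unit Ab) = indicator (Xmin E)"
proof -
  have "Bset E (rr E 0) 0 = Xmin E"
    unfolding rr_def Bset_def Xmin_def by auto
  then have "\<Phi> 0 (vec 1 (\<lambda>_. 1)) = indicator (Xmin E)"
    unfolding Phi_def Rmap_def Amat_0 by (simp add: fun_eq_iff)
  then show ?thesis unfolding K0_unit_def by (simp add: Psi_iota)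
qed

end

theorem mainTheorem9:
  fixes Ab :: "nat \<Rightarrow> int mat" and E :: "nat \<Rightarrow> nat \<Rightarrow> nat \<Rightarrow> bool" and c :: "nat \<Rightarrow> int vec"
  assumes dims: "\<forall>n. Ab n \<in> carrier_mat (n+2) (n+1)"
    and nonneg: "\<forall>n i j. i < n+2 \<longrightarrow> j < n+1 \<longrightarrow> 0 \<le> Ab n $$ (i,j)"
    and rank: "\<forall>n. vec_space.rank (n+2) (map_mat (of_int :: int \<Rightarrow> rat) (Ab n)) = n+1"
    and red: "min_reduction Ab E"
    and cdim: "\<forall>n. c n \<in> carrier_vec (n+2)"
    and cinv: "\<forall>n. det (Acomb Ab c n) \<noteq> 0"
  shows "(\<forall>n\<ge>1. Phi Ab c E n ` carrier_vec (n+1) \<subseteq> Cfun E (Gset Ab c)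
            \<and> inj_on (Phi Ab c E n) (carrier_vec (n+1))
            \<and> (\<forall>v\<in>carrier_vec (n+1). Phi Ab c E (n+1) (Ab n *\<^sub>v v) = Phi Ab c E n v))
       \<and> (\<exists>\<Psi>. \<Psi> ` K0 Ab \<subseteq> Cfun E (Gset Ab c)
            \<and> (\<forall>X\<in>K0 Ab. \<forall>Y\<in>K0 Ab. \<Psi> (K0_add Ab X Y) = (\<lambda>x. \<Psi> X x + \<Psi> Y x))
            \<and> inj_on \<Psi> (K0 Ab)
            \<and> (\<forall>n\<ge>1. \<forall>v\<in>carrier_vec (n+1). \<Psi> (iota Ab n v) = Phi Ab c E n v)
            \<and> \<Psi> (K0_unit Ab) = indicator (Xmin E))"
proof -
  interpret bratteli_completion Ab c E
    using dims cinv minimal_reduction_graphI[OF red]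
    by (simp add: bratteli_completion_def completion_data_def)
  show ?thesis
  proof (intro conjI exI[of _ Psi])
    show "\<forall>n\<ge>1. Phi Ab c E n ` carrier_vec (n+1) \<subseteq> Cfun E (Gset Ab c)
            \<and> inj_on (Phi Ab c E n) (carrier_vec (n+1))
            \<and> (\<forall>v\<in>carrier_vec (n+1). Phi Ab c E (n+1) (Ab n *\<^sub>v v) = Phi Ab c E n v)"
      using Phi_in_Cfun inj_on_Phi Phi_Ab_mult by auto
    show "Psi ` K0 Ab \<subseteq> Cfun E (Gset Ab c)"
      using Psi_in_Cfun by blast
    show "\<forall>X\<in>K0 Ab. \<forall>Y\<in>K0 Ab. Psi (K0_add Ab X Y) = (\<lambda>x. Psi X x + Psi Y x)"
      using Psi_K0_add by blast
    show "inj_on Psi (K0 Ab)"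
      by (fact inj_on_Psi)
    show "\<forall>n\<ge>1. \<forall>v\<in>carrier_vec (n+1). Psi (iota Ab n v) = Phi Ab c E n v"
      using Psi_iota by blast
    show "Psi (K0_unit Ab) = indicator (Xmin E)"
      by (fact Psi_K0_unit)
  qed
qed

end
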